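(* Let $(T_n)$ be a sequence of tournaments with $|T_n|\to\infty$ such that $c_3=\lim\mathbf{pr}(C_3,T_n)$ and $c_4=\lim\mathbf{pr}(C_4,T_n)$ exist. Then $$c_4\ge \frac{18c_3^2}{1+8c_3}.$$
   Context: For tournaments $T,H$, $\mathbf{pr}(H,T)$ denotes the probability that a uniformly random set of $|H|$ vertices of $T$ spans a subtournament isomorphic to $H$. $C_3$ is the cyclically oriented triangle and $C_4$ is the $4$-vertex tournament (unique up to isomorphism) containing a directed Hamiltonian $4$-cycle. *)

theory Defs
  imports Complex_Main
begin

definition tournament :: "'a set \<Rightarrow> ('a \<Rightarrow> 'a \<Rightarrow> bool) \<Rightarrow> bool" where
  "tournament V E \<longleftrightarrow> finite V \<and> (\<forall>x\<in>V. \<not> E x x) \<and>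
     (\<forall>x\<in>V. \<forall>y\<in>V. x \<noteq> y \<longrightarrow> (E x y \<longleftrightarrow> \<not> E y x))"

definition spans_copy :: "'b set \<Rightarrow> ('b \<Rightarrow> 'b \<Rightarrow> bool) \<Rightarrow> ('a \<Rightarrow> 'a \<Rightarrow> bool) \<Rightarrow> 'a set \<Rightarrow> bool" where
  "spans_copy VH EH E S \<longleftrightarrow>
     (\<exists>f. bij_betw f VH S \<and> (\<forall>x\<in>VH. \<forall>y\<in>VH. EH x y \<longleftrightarrow> E (f x) (f y)))"

definition pr :: "'b set \<Rightarrow> ('b \<Rightarrow> 'b \<Rightarrow> bool) \<Rightarrow> 'a set \<Rightarrow> ('a \<Rightarrow> 'a \<Rightarrow> bool) \<Rightarrow> real" where
  "pr VH EH V E =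
     real (card {S. S \<subseteq> V \<and> card S = card VH \<and> spans_copy VH EH E S})
     / real (card V choose card VH)"

definition C3_V :: "nat set" where "C3_V = {0,1,2}"
definition C3_E :: "nat \<Rightarrow> nat \<Rightarrow> bool" where
  "C3_E x y \<longleftrightarrow> y = (x + 1) mod 3"

definition C4_V :: "nat set" where "C4_V = {0,1,2,3}"
definition C4_E :: "nat \<Rightarrow> nat \<Rightarrow> bool" where
  "C4_E x y \<longleftrightarrow> (x,y) \<in> {(0,1),(1,2),(2,3),(3,0),(0,2),(1,3)}"

end

theory Submission
  imports Defs
begin

text \<open>
  For an arc u \<rightarrow> v of a tournament on n vertices let k(u,v) be the number of vertices x with
  v \<rightarrow> x \<rightarrow> u, and d(u,v) = outdeg(v) - outdeg(u). Two such x joined by an arc span a C4 together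
  with u and v, and this labelling of a C4 is unique, so #C4 \<ge> \<Sum> k(k-1)/2 over arcs.
  Expanding \<Sum> (k - \<beta> d - \<gamma> n)^2 \<ge> 0 over arcs bounds \<Sum> k^2 below in terms of
  \<Sum> k = 3 #C3, \<Sum> k d = 0, \<Sum> d and \<Sum> d^2. The last two depend only on n and \<Sum> outdeg(u)^2,
  and summing k(u,v) = outdeg(v) - #(common out-neighbours of u and v) over all arcs expresses
  \<Sum> outdeg(u)^2 through n and #C3. Dividing by n^4, letting n \<rightarrow> \<infinity> and choosing
  \<beta> = 6 c3/(1 + 8 c3), \<gamma> = 3 c3/(1 + 8 c3) optimally gives the bound.
\<close>

section \<open>Arc sums in tournaments\<close>

definition outdeg :: "'a set \<Rightarrow> ('a \<Rightarrow> 'a \<Rightarrow> bool) \<Rightarrow> 'a \<Rightarrow> real" where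
  "outdeg V E u = (\<Sum>x\<in>V. of_bool (E u x))"

definition cyc_completions :: "'a set \<Rightarrow> ('a \<Rightarrow> 'a \<Rightarrow> bool) \<Rightarrow> 'a \<Rightarrow> 'a \<Rightarrow> real" where
  "cyc_completions V E u v = (\<Sum>x\<in>V. of_bool (E v x \<and> E x u))"

definition cyc_triples :: "'a set \<Rightarrow> ('a \<Rightarrow> 'a \<Rightarrow> bool) \<Rightarrow> real" where
  "cyc_triples V E = (\<Sum>u\<in>V. \<Sum>v\<in>V. \<Sum>x\<in>V. of_bool (E u v \<and> E v x \<and> E x u))"

lemma sum_rotate3:
  "(\<Sum>a\<in>A. \<Sum>b\<in>B. \<Sum>c\<in>C. f a b c) = (\<Sum>b\<in>B. \<Sum>c\<in>C. \<Sum>a\<in>A. f a b c)"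
  by (subst sum.swap) (rule sum.cong[OF refl sum.swap])

lemma sum_of_bool_neq:
  assumes "finite W" "x \<in> W"
  shows "(\<Sum>y\<in>W. (of_bool (x \<noteq> y) :: real)) = real (card W) - 1"
proof -
  have "{y \<in> W. x \<noteq> y} = W - {x}" by auto
  moreover have "card W \<ge> 1" using assms card_0_eq by fastforce
  ultimately show ?thesis using assms by (simp add: sum_of_bool_eq Int_def of_nat_diff)
qed

lemma sum_arc_cyc_completions:
  "(\<Sum>u\<in>V. \<Sum>v\<in>V. of_bool (E u v) * cyc_completions V E u v) = cyc_triples V E"
  unfolding cyc_completions_def cyc_triples_def
  by (simp add: sum_distrib_left of_bool_conj mult.assoc)

lemma sum_arc_outdeg_tail:
  "(\<Sum>u\<in>V. \<Sum>v\<in>V. of_bool (E u v) * outdeg V E u) = (\<Sum>u\<in>V. outdeg V E u ^ 2)"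
  by (simp add: power2_eq_square sum_distrib_right[symmetric]) (simp add: outdeg_def)

text \<open>Each cyclic triangle contributes the differences of out-degrees around it, which cancel.\<close>

lemma sum_arc_cyc_completions_outdeg_diff:
  "(\<Sum>u\<in>V. \<Sum>v\<in>V. of_bool (E u v) * cyc_completions V E u v * (outdeg V E v - outdeg V E u)) = 0"
proof -
  let ?c = "\<lambda>u v x. (of_bool (E u v \<and> E v x \<and> E x u) :: real)"
  have "(\<Sum>u\<in>V. \<Sum>v\<in>V. of_bool (E u v) * cyc_completions V E u v * (outdeg V E v - outdeg V E u))
     = (\<Sum>u\<in>V. \<Sum>v\<in>V. \<Sum>x\<in>V. ?c u v x * outdeg V E v)
       - (\<Sum>u\<in>V. \<Sum>v\<in>V. \<Sum>x\<in>V. ?c u v x * outdeg V E u)"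
    unfolding cyc_completions_def
    by (simp add: sum_distrib_left sum_distrib_right of_bool_conj algebra_simps sum_subtractf)
  also have "(\<Sum>u\<in>V. \<Sum>v\<in>V. \<Sum>x\<in>V. ?c u v x * outdeg V E v)
      = (\<Sum>v\<in>V. \<Sum>x\<in>V. \<Sum>u\<in>V. ?c v x u * outdeg V E v)"
    by (subst sum_rotate3) (simp add: conj_commute conj_left_commute)
  finally show ?thesis by simp
qed

locale finite_tournament =
  fixes V :: "'a set" and E :: "'a \<Rightarrow> 'a \<Rightarrow> bool"
  assumes tournament: "tournament V E"
begin

lemma finite_V: "finite V"
  using tournament by (simp add: tournament_def)

lemma irrefl: "x \<in> V \<Longrightarrow> \<not> E x x"
  using tournament by (simp add: tournament_def)

lemma asym: "x \<in> V \<Longrightarrow> y \<in> V \<Longrightarrow> E x y \<Longrightarrow> \<not> E y x"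
  using tournament unfolding tournament_def by metis

lemma total: "x \<in> V \<Longrightarrow> y \<in> V \<Longrightarrow> x \<noteq> y \<Longrightarrow> \<not> E x y \<Longrightarrow> E y x"
  using tournament unfolding tournament_def by metis

lemma subtournament: "W \<subseteq> V \<Longrightarrow> finite_tournament W E"
  using tournament finite_subset unfolding finite_tournament_def tournament_def by (meson subsetD)

lemma arc_pair:
  assumes "x \<in> V" "y \<in> V"
  shows "of_bool (E x y) + of_bool (E y x) = (of_bool (x \<noteq> y) :: real)"
proof (cases "x = y")
  case False
  then show ?thesis using assms asym[of x y] total[of x y] by (cases "E x y") simp_all
qed (simp add: irrefl assms)

lemma arc_count: "(\<Sum>x\<in>V. \<Sum>y\<in>V. (of_bool (E x y) :: real)) = real (card V) * (real (card V) - 1) / 2"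
proof -
  have "2 * (\<Sum>x\<in>V. \<Sum>y\<in>V. (of_bool (E x y) :: real))
      = (\<Sum>x\<in>V. \<Sum>y\<in>V. of_bool (E x y)) + (\<Sum>y\<in>V. \<Sum>x\<in>V. of_bool (E x y))"
    by (subst (2) sum.swap) simp
  also have "\<dots> = (\<Sum>x\<in>V. \<Sum>y\<in>V. of_bool (x \<noteq> y))"
    by (simp add: arc_pair flip: sum.distrib)
  also have "\<dots> = real (card V) * (real (card V) - 1)"
    by (simp add: sum_of_bool_neq finite_V del: sum_of_bool_eq)
  finally show ?thesis by simp
qed

lemma sum_indeg:
  assumes "v \<in> V"
  shows "(\<Sum>u\<in>V. (of_bool (E u v) :: real)) = real (card V) - 1 - outdeg V E v"
proof -
  have "(\<Sum>u\<in>V. (of_bool (E u v) :: real)) + outdeg V E v = (\<Sum>u\<in>V. of_bool (v \<noteq> u))"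
    unfolding outdeg_def using arc_pair[OF assms] by (simp add: add.commute flip: sum.distrib)
  then show ?thesis using assms by (simp add: sum_of_bool_neq finite_V del: sum_of_bool_eq)
qed

lemma sum_outdeg: "(\<Sum>u\<in>V. outdeg V E u) = real (card V) * (real (card V) - 1) / 2"
  unfolding outdeg_def by (rule arc_count)

lemma sum_arc_outdeg_head:
  "(\<Sum>u\<in>V. \<Sum>v\<in>V. of_bool (E u v) * outdeg V E v)
     = (real (card V) - 1) * (\<Sum>u\<in>V. outdeg V E u) - (\<Sum>u\<in>V. outdeg V E u ^ 2)"
proof -
  have "(\<Sum>u\<in>V. \<Sum>v\<in>V. of_bool (E u v) * outdeg V E v)
      = (\<Sum>v\<in>V. (real (card V) - 1 - outdeg V E v) * outdeg V E v)"
    by (subst sum.swap) (simp add: sum_indeg flip: sum_distrib_right)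
  also have "\<dots> = (real (card V) - 1) * (\<Sum>u\<in>V. outdeg V E u) - (\<Sum>u\<in>V. outdeg V E u ^ 2)"
    by (simp add: left_diff_distrib sum_subtractf sum_distrib_left power2_eq_square)
  finally show ?thesis .
qed

lemma sum_arc_outdeg_diff_sq:
  "(\<Sum>u\<in>V. \<Sum>v\<in>V. of_bool (E u v) * (outdeg V E v - outdeg V E u)^2)
     = real (card V) * (\<Sum>u\<in>V. outdeg V E u ^ 2) - (\<Sum>u\<in>V. outdeg V E u)^2"
proof -
  let ?d = "outdeg V E"
  have "2 * (\<Sum>u\<in>V. \<Sum>v\<in>V. of_bool (E u v) * (?d v - ?d u)^2)
      = (\<Sum>u\<in>V. \<Sum>v\<in>V. of_bool (E u v) * (?d v - ?d u)^2)
        + (\<Sum>u\<in>V. \<Sum>v\<in>V. of_bool (E v u) * (?d v - ?d u)^2)"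
    by (subst (3) sum.swap) (simp add: power2_commute)
  also have "\<dots> = (\<Sum>u\<in>V. \<Sum>v\<in>V. of_bool (u \<noteq> v) * (?d v - ?d u)^2)"
    by (simp add: arc_pair flip: sum.distrib distrib_right)
  also have "\<dots> = (\<Sum>u\<in>V. \<Sum>v\<in>V. (?d v - ?d u)^2)"
    by (intro sum.cong refl) auto
  also have "\<dots> = (\<Sum>u\<in>V. \<Sum>v\<in>V. ?d v ^ 2 - 2 * ?d u * ?d v + ?d u ^ 2)"
    by (simp add: power2_diff algebra_simps)
  also have "\<dots> = 2 * (real (card V) * (\<Sum>u\<in>V. ?d u ^ 2) - (\<Sum>u\<in>V. ?d u)^2)"
    by (simp add: sum.distrib sum_subtractf power2_eq_square algebra_simps
        flip: sum_distrib_left sum_distrib_right)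
  finally show ?thesis by simp
qed

lemma cyc_completions_eq:
  assumes "u \<in> V" "v \<in> V" "E u v"
  shows "cyc_completions V E u v = outdeg V E v - (\<Sum>x\<in>V. of_bool (E u x \<and> E v x))"
proof -
  have "of_bool (E v x \<and> E x u) = of_bool (E v x) - (of_bool (E u x \<and> E v x) :: real)" if "x \<in> V" for x
    using assms that asym[of u v] asym[of u x] total[of u x] irrefl[of u]
    by (cases "x = u"; cases "E v x"; cases "E u x") simp_all
  then show ?thesis
    unfolding cyc_completions_def outdeg_def by (simp add: sum_subtractf)
qed

lemma sum_common_out_neighbours:
  "(\<Sum>u\<in>V. \<Sum>v\<in>V. \<Sum>x\<in>V. (of_bool (E u v \<and> E u x \<and> E v x) :: real))
     = (\<Sum>u\<in>V. outdeg V E u * (outdeg V E u - 1) / 2)"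
proof (rule sum.cong[OF refl])
  fix u assume "u \<in> V"
  define W where "W = {x \<in> V. E u x}"
  interpret W: finite_tournament W E
    by (rule subtournament) (auto simp: W_def)
  have "outdeg V E u = real (card W)"
    unfolding outdeg_def W_def using finite_V by (simp add: Int_def)
  moreover have "(\<Sum>v\<in>V. \<Sum>x\<in>V. (of_bool (E u v \<and> E u x \<and> E v x) :: real))
      = (\<Sum>v\<in>W. \<Sum>x\<in>W. of_bool (E v x))"
  proof -
    have restrict: "(\<Sum>v\<in>W. g v) = (\<Sum>v\<in>V. g v * of_bool (E u v))" for g :: "'a \<Rightarrow> real"
      using finite_V by (simp add: sum_mult_of_bool_eq W_def Int_def)
    show ?thesis
      by (simp add: restrict of_bool_conj sum_distrib_left mult_ac)
  qed
  ultimately show "(\<Sum>v\<in>V. \<Sum>x\<in>V. (of_bool (E u v \<and> E u x \<and> E v x) :: real))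
      = outdeg V E u * (outdeg V E u - 1) / 2"
    using W.arc_count by simp
qed

lemma cyc_triples_outdeg:
  "2 * cyc_triples V E
     = (2 * real (card V) - 1) * (\<Sum>u\<in>V. outdeg V E u) - 3 * (\<Sum>u\<in>V. outdeg V E u ^ 2)"
proof -
  have "cyc_triples V E = (\<Sum>u\<in>V. \<Sum>v\<in>V. of_bool (E u v) * cyc_completions V E u v)"
    by (rule sum_arc_cyc_completions[symmetric])
  also have "\<dots> = (\<Sum>u\<in>V. \<Sum>v\<in>V. of_bool (E u v) * outdeg V E v
                       - (\<Sum>x\<in>V. of_bool (E u v \<and> E u x \<and> E v x)))"
    by (intro sum.cong refl) (auto simp: cyc_completions_eq sum_distrib_left of_bool_conj)
  also have "\<dots> = (real (card V) - 1) * (\<Sum>u\<in>V. outdeg V E u) - (\<Sum>u\<in>V. outdeg V E u ^ 2)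
                   - (\<Sum>u\<in>V. outdeg V E u * (outdeg V E u - 1) / 2)"
    by (simp add: sum_subtractf sum_arc_outdeg_head sum_common_out_neighbours)
  moreover have "(\<Sum>u\<in>V. outdeg V E u * (outdeg V E u - 1) / 2)
      = ((\<Sum>u\<in>V. outdeg V E u ^ 2) - (\<Sum>u\<in>V. outdeg V E u)) / 2"
    by (simp add: power2_eq_square right_diff_distrib sum_subtractf flip: sum_divide_distrib)
  ultimately show ?thesis
    by (simp add: algebra_simps)
qed

lemma sum_arc_cyc_completions_sq_ge:
  "2 * \<gamma> * cyc_triples V E
     - \<beta>^2 * (real (card V) * (\<Sum>u\<in>V. outdeg V E u ^ 2) - (\<Sum>u\<in>V. outdeg V E u)^2)
     - 2 * \<beta> * \<gamma> * ((real (card V) - 1) * (\<Sum>u\<in>V. outdeg V E u) - 2 * (\<Sum>u\<in>V. outdeg V E u ^ 2))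
     - \<gamma>^2 * (\<Sum>u\<in>V. outdeg V E u)
   \<le> (\<Sum>u\<in>V. \<Sum>v\<in>V. of_bool (E u v) * cyc_completions V E u v ^ 2)"
proof -
  let ?a = "\<lambda>u v. (of_bool (E u v) :: real)"
  let ?k = "cyc_completions V E"
  let ?d = "\<lambda>u v. outdeg V E v - outdeg V E u"
  let ?S = "\<lambda>f. \<Sum>u\<in>V. \<Sum>v\<in>V. (f u v :: real)"
  have "0 \<le> ?S (\<lambda>u v. ?a u v * (?k u v - \<beta> * ?d u v - \<gamma>)^2)"
    by (intro sum_nonneg) auto
  also have "\<dots> = ?S (\<lambda>u v. ?a u v * ?k u v ^ 2) - 2 * \<beta> * ?S (\<lambda>u v. ?a u v * ?k u v * ?d u v)
      - 2 * \<gamma> * ?S (\<lambda>u v. ?a u v * ?k u v) + \<beta>^2 * ?S (\<lambda>u v. ?a u v * ?d u v ^ 2)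
      + 2 * \<beta> * \<gamma> * ?S (\<lambda>u v. ?a u v * ?d u v) + \<gamma>^2 * ?S ?a"
    by (simp add: power2_eq_square algebra_simps sum.distrib sum_subtractf sum_distrib_left)
  also have "?S (\<lambda>u v. ?a u v * ?d u v)
      = (real (card V) - 1) * (\<Sum>u\<in>V. outdeg V E u) - 2 * (\<Sum>u\<in>V. outdeg V E u ^ 2)"
    by (simp add: right_diff_distrib sum_subtractf sum_arc_outdeg_head sum_arc_outdeg_tail)
  also have "?S ?a = (\<Sum>u\<in>V. outdeg V E u)"
    by (simp add: outdeg_def)
  finally show ?thesis
    by (simp add: sum_arc_cyc_completions_outdeg_diff sum_arc_cyc_completions sum_arc_outdeg_diff_sq)
qed

end

section \<open>Counting copies of C3 and C4\<close>

lemma card_eq_mult_card_image: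
  assumes "finite A" and "\<And>b. b \<in> g ` A \<Longrightarrow> card {a \<in> A. g a = b} = m"
  shows "card A = m * card (g ` A)"
proof -
  have "card A = (\<Sum>b\<in>g ` A. card {a \<in> A. g a = b})"
    using sum.image_gen[OF assms(1), of "\<lambda>_. 1 :: nat" g] by simp
  then show ?thesis using assms(2) by simp
qed

lemma card_copies_eq:
  assumes "finite V"
  shows "real (card {S. S \<subseteq> V \<and> card S = card VH \<and> spans_copy VH EH E S})
           = pr VH EH V E * real (card V choose card VH)"
proof (cases "card V choose card VH = 0")
  case True
  have "card {S. S \<subseteq> V \<and> card S = card VH \<and> spans_copy VH EH E S} \<le> card {S. S \<subseteq> V \<and> card S = card VH}"
    using assms by (intro card_mono) auto
  then have "card {S. S \<subseteq> V \<and> card S = card VH \<and> spans_copy VH EH E S} = 0"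
    using True assms by (simp only: n_subsets)
  then show ?thesis using True by (metis mult_zero_right of_nat_0)
qed (simp add: pr_def)

lemma spans_C3_cyc_triple:
  assumes "spans_copy C3_V C3_E E S"
  obtains u v x where "S = {u, v, x}" "E u v" "E v x" "E x u"
proof -
  obtain f where f: "bij_betw f C3_V S" "\<forall>a\<in>C3_V. \<forall>b\<in>C3_V. C3_E a b \<longleftrightarrow> E (f a) (f b)"
    using assms unfolding spans_copy_def by blast
  have "S = {f 0, f 1, f 2}"
    using f(1) by (auto simp: bij_betw_def C3_V_def)
  moreover have "E (f 0) (f 1)" "E (f 1) (f 2)" "E (f 2) (f 0)"
    using f(2) by (auto simp: C3_V_def C3_E_def)
  ultimately show ?thesis using that by blast
qed

text \<open>x and y both close the arc u \<rightarrow> v to a cyclic triangle and x \<rightarrow> y; then v, x, y, u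
  play the roles of 0, 1, 2, 3 in C4.\<close>

definition C4_config :: "('a \<Rightarrow> 'a \<Rightarrow> bool) \<Rightarrow> 'a \<Rightarrow> 'a \<Rightarrow> 'a \<Rightarrow> 'a \<Rightarrow> bool" where
  "C4_config E u v x y \<longleftrightarrow> E u v \<and> E v x \<and> E x u \<and> E v y \<and> E y u \<and> E x y"

context finite_tournament
begin

lemma cyc_triple_distinct:
  assumes "u \<in> V" "v \<in> V" "x \<in> V" "E u v" "E v x" "E x u"
  shows "u \<noteq> v" "v \<noteq> x" "x \<noteq> u"
  using assms irrefl by metis+

lemma cyc_triple_spans_C3:
  assumes "u \<in> V" "v \<in> V" "x \<in> V" "E u v" "E v x" "E x u"
  shows "spans_copy C3_V C3_E E {u, v, x}"
proof -
  define f where "f = (\<lambda>i::nat. if i = 0 then u else if i = 1 then v else x)"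
  have "\<not> E v u" "\<not> E x v" "\<not> E u x" "\<not> E u u" "\<not> E v v" "\<not> E x x"
    using assms asym irrefl by blast+
  then have "\<forall>a\<in>C3_V. \<forall>b\<in>C3_V. C3_E a b \<longleftrightarrow> E (f a) (f b)"
    using assms by (simp add: C3_V_def C3_E_def f_def)
  moreover have "bij_betw f C3_V {u, v, x}"
    using cyc_triple_distinct[OF assms] by (auto simp: bij_betw_def inj_on_def C3_V_def f_def)
  ultimately show ?thesis unfolding spans_copy_def by blast
qed

lemma cyc_triple_rotation:
  assumes "u \<in> V" "v \<in> V" "x \<in> V" "E u v" "E v x" "E x u"
    and "E a b" "E b c" "E c a" "{a, b, c} = {u, v, x}"
  shows "(a, b, c) \<in> {(u, v, x), (v, x, u), (x, u, v)}"
proof -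
  have "a \<in> {u, v, x}" "b \<in> {u, v, x}" "c \<in> {u, v, x}"
    using assms(10) by blast+
  moreover have "\<not> E v u" "\<not> E x v" "\<not> E u x" "\<not> E u u" "\<not> E v v" "\<not> E x x"
    using assms(1-6) asym irrefl by blast+
  ultimately show ?thesis using assms(7-9) by fastforce
qed

lemma card_C3_copies:
  "3 * real (card {S. S \<subseteq> V \<and> card S = card C3_V \<and> spans_copy C3_V C3_E E S}) = cyc_triples V E"
proof -
  define Cyc where "Cyc = (SIGMA u:V. SIGMA v:V. {x \<in> V. E u v \<and> E v x \<and> E x u})"
  define g where "g = (\<lambda>(u, v, x). {u, v, x} :: 'a set)"
  have cyc_card: "cyc_triples V E = real (card Cyc)"
    unfolding cyc_triples_def Cyc_def using finite_V
    by (simp add: card_SigmaI sum_of_bool_eq Int_def conj_commute)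
  have image: "g ` Cyc = {S. S \<subseteq> V \<and> card S = card C3_V \<and> spans_copy C3_V C3_E E S}"
  proof (intro equalityI subsetI)
    fix S assume "S \<in> g ` Cyc"
    then obtain u v x where uvx: "u \<in> V" "v \<in> V" "x \<in> V" "E u v" "E v x" "E x u" and "S = {u, v, x}"
      unfolding Cyc_def g_def by auto
    with cyc_triple_spans_C3[OF uvx] cyc_triple_distinct[OF uvx]
    show "S \<in> {S. S \<subseteq> V \<and> card S = card C3_V \<and> spans_copy C3_V C3_E E S}"
      by (simp add: C3_V_def)
  next
    fix S assume "S \<in> {S. S \<subseteq> V \<and> card S = card C3_V \<and> spans_copy C3_V C3_E E S}"
    then have "S \<subseteq> V" and "spans_copy C3_V C3_E E S" by auto
    moreover obtain u v x where "S = {u, v, x}" "E u v" "E v x" "E x u"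
      using spans_C3_cyc_triple[OF \<open>spans_copy C3_V C3_E E S\<close>] .
    ultimately show "S \<in> g ` Cyc"
      unfolding Cyc_def g_def by (intro image_eqI[of _ _ "(u, v, x)"]) auto
  qed
  have "card {t \<in> Cyc. g t = S} = 3" if "S \<in> g ` Cyc" for S
  proof -
    from that obtain u v x where uvx: "u \<in> V" "v \<in> V" "x \<in> V" "E u v" "E v x" "E x u"
      and S: "S = {u, v, x}"
      unfolding Cyc_def g_def by auto
    have "{t \<in> Cyc. g t = S} = {(u, v, x), (v, x, u), (x, u, v)}"
    proof (intro equalityI subsetI)
      fix t assume "t \<in> {t \<in> Cyc. g t = S}"
      then obtain a b c where "t = (a, b, c)" "E a b" "E b c" "E c a" "{a, b, c} = {u, v, x}"
        unfolding Cyc_def g_def S by auto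
      then show "t \<in> {(u, v, x), (v, x, u), (x, u, v)}"
        using cyc_triple_rotation[OF uvx] by simp
    next
      fix t assume "t \<in> {(u, v, x), (v, x, u), (x, u, v)}"
      then show "t \<in> {t \<in> Cyc. g t = S}"
        using uvx unfolding Cyc_def g_def S by (auto simp: insert_commute)
    qed
    then show ?thesis
      using cyc_triple_distinct[OF uvx] by simp
  qed
  then have "card Cyc = 3 * card (g ` Cyc)"
    by (intro card_eq_mult_card_image) (auto simp: Cyc_def finite_V)
  then show ?thesis
    unfolding cyc_card image[symmetric] by simp
qed

lemma C4_config_distinct:
  assumes "u \<in> V" "v \<in> V" "x \<in> V" "y \<in> V" "C4_config E u v x y"
  shows "u \<noteq> v" "u \<noteq> x" "u \<noteq> y" "v \<noteq> x" "v \<noteq> y" "x \<noteq> y"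
  using assms irrefl unfolding C4_config_def by metis+

lemma C4_config_non_arcs:
  assumes "u \<in> V" "v \<in> V" "x \<in> V" "y \<in> V" "C4_config E u v x y"
  shows "\<not> E v u" "\<not> E x v" "\<not> E u x" "\<not> E y v" "\<not> E u y" "\<not> E y x"
  using assms asym unfolding C4_config_def by metis+

lemma C4_config_unique:
  assumes "u \<in> V" "v \<in> V" "x \<in> V" "y \<in> V" "C4_config E u v x y"
    and "u' \<in> V" "v' \<in> V" "x' \<in> V" "y' \<in> V" "C4_config E u' v' x' y'"
    and "{u, v, x, y} = {u', v', x', y'}"
  shows "(u, v, x, y) = (u', v', x', y')"
proof -
  note distinct = C4_config_distinct[OF assms(1-5)] C4_config_distinct[OF assms(6-10)]
  note non_arcs = C4_config_non_arcs[OF assms(1-5)] C4_config_non_arcs[OF assms(6-10)]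
  have "u' \<in> {u, v, x, y}" "v' \<in> {u, v, x, y}" "x' \<in> {u, v, x, y}" "y' \<in> {u, v, x, y}"
    using assms(11) by blast+
  then show ?thesis
    using assms(5,10) distinct non_arcs unfolding C4_config_def by fastforce
qed

lemma C4_config_spans_C4:
  assumes "u \<in> V" "v \<in> V" "x \<in> V" "y \<in> V" "C4_config E u v x y"
  shows "spans_copy C4_V C4_E E {u, v, x, y}"
proof -
  define f where "f = (\<lambda>i::nat. if i = 0 then v else if i = 1 then x else if i = 2 then y else u)"
  have "\<forall>a\<in>C4_V. \<forall>b\<in>C4_V. C4_E a b \<longleftrightarrow> E (f a) (f b)"
    using assms(5) C4_config_non_arcs[OF assms] irrefl assms(1-4)
    by (simp add: C4_V_def C4_E_def C4_config_def f_def)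
  moreover have "bij_betw f C4_V {u, v, x, y}"
    using C4_config_distinct[OF assms] by (auto simp: bij_betw_def inj_on_def C4_V_def f_def)
  ultimately show ?thesis unfolding spans_copy_def by blast
qed

lemma sum_C4_configs:
  assumes "u \<in> V" "v \<in> V"
  shows "(\<Sum>x\<in>V. \<Sum>y\<in>V. (of_bool (C4_config E u v x y) :: real))
           = of_bool (E u v) * (cyc_completions V E u v * (cyc_completions V E u v - 1) / 2)"
proof -
  define W where "W = {x \<in> V. E v x \<and> E x u}"
  interpret W: finite_tournament W E
    by (rule subtournament) (auto simp: W_def)
  have restrict: "(\<Sum>x\<in>W. g x) = (\<Sum>x\<in>V. g x * of_bool (E v x \<and> E x u))" for g :: "'a \<Rightarrow> real"
    using finite_V by (simp add: sum_mult_of_bool_eq W_def Int_def)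
  have "cyc_completions V E u v = real (card W)"
    unfolding cyc_completions_def W_def using finite_V by (simp add: Int_def)
  moreover have "(\<Sum>x\<in>V. \<Sum>y\<in>V. (of_bool (C4_config E u v x y) :: real))
      = of_bool (E u v) * (\<Sum>x\<in>W. \<Sum>y\<in>W. of_bool (E x y))"
    by (simp add: restrict C4_config_def of_bool_conj sum_distrib_left sum_distrib_right mult_ac)
  ultimately show ?thesis
    using W.arc_count by simp
qed

lemma card_C4_copies_ge:
  "(\<Sum>u\<in>V. \<Sum>v\<in>V. of_bool (E u v) * cyc_completions V E u v ^ 2) - cyc_triples V E
     \<le> 2 * real (card {S. S \<subseteq> V \<and> card S = card C4_V \<and> spans_copy C4_V C4_E E S})"
proof -
  define Q where "Q = (SIGMA u:V. SIGMA v:V. SIGMA x:V. {y \<in> V. C4_config E u v x y})"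
  define h where "h = (\<lambda>(u, v, x, y). {u, v, x, y} :: 'a set)"
  have "real (card Q) = (\<Sum>u\<in>V. \<Sum>v\<in>V. \<Sum>x\<in>V. \<Sum>y\<in>V. of_bool (C4_config E u v x y))"
    unfolding Q_def using finite_V by (simp add: card_SigmaI sum_of_bool_eq Int_def conj_commute)
  also have "\<dots> = (\<Sum>u\<in>V. \<Sum>v\<in>V. of_bool (E u v) * cyc_completions V E u v ^ 2 / 2
                                   - of_bool (E u v) * cyc_completions V E u v / 2)"
    by (intro sum.cong refl) (simp add: sum_C4_configs power2_eq_square field_simps)
  also have "\<dots> = ((\<Sum>u\<in>V. \<Sum>v\<in>V. of_bool (E u v) * cyc_completions V E u v ^ 2) - cyc_triples V E) / 2"
    by (simp add: sum_subtractf diff_divide_distrib sum_arc_cyc_completions flip: sum_divide_distrib)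
  finally have card_Q: "real (card Q) = \<dots>" .
  have "h ` Q \<subseteq> {S. S \<subseteq> V \<and> card S = card C4_V \<and> spans_copy C4_V C4_E E S}"
  proof
    fix S assume "S \<in> h ` Q"
    then obtain u v x y where uvxy: "u \<in> V" "v \<in> V" "x \<in> V" "y \<in> V" "C4_config E u v x y"
      and S: "S = {u, v, x, y}"
      unfolding Q_def h_def by auto
    show "S \<in> {S. S \<subseteq> V \<and> card S = card C4_V \<and> spans_copy C4_V C4_E E S}"
      using C4_config_spans_C4[OF uvxy] C4_config_distinct[OF uvxy] uvxy(1-4)
      by (simp add: S C4_V_def)
  qed
  moreover have "inj_on h Q"
  proof
    fix s t assume "s \<in> Q" "t \<in> Q" "h s = h t"
    then show "s = t"
      unfolding Q_def h_def using C4_config_unique by auto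
  qed
  moreover have "finite {S. S \<subseteq> V \<and> card S = card C4_V \<and> spans_copy C4_V C4_E E S}"
    using finite_V by simp
  ultimately have "card Q \<le> card {S. S \<subseteq> V \<and> card S = card C4_V \<and> spans_copy C4_V C4_E E S}"
    by (intro card_inj_on_le)
  then show ?thesis using card_Q by simp
qed

lemma cyc_triples_eq_pr_C3:
  "cyc_triples V E
     = pr C3_V C3_E V E * real (card V) * (real (card V) - 1) * (real (card V) - 2) / 2"
  using card_C3_copies card_copies_eq[OF finite_V, of C3_V C3_E E]
  by (simp add: C3_V_def binomial_gbinomial gbinomial_prod_rev numeral_eq_Suc atLeast0LessThan)

lemma card_C4_copies_eq_pr:
  "real (card {S. S \<subseteq> V \<and> card S = card C4_V \<and> spans_copy C4_V C4_E E S})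
     = pr C4_V C4_E V E * real (card V) * (real (card V) - 1) * (real (card V) - 2)
         * (real (card V) - 3) / 24"
  using card_copies_eq[OF finite_V, of C4_V C4_E E]
  by (simp add: C4_V_def binomial_gbinomial gbinomial_prod_rev numeral_eq_Suc atLeast0LessThan)

end

section \<open>Passing to the limit\<close>

text \<open>With h = 1/n and p = pr(C3,T), the numbers \<nu>, \<kappa>, \<omega> are the number of arcs over n^2,
  cyc_triples over n^3 and \<Sum> outdeg(u)^2 over n^3, and C4_bound is the lower bound of the
  sum-of-squares argument divided by n^4.\<close>

definition C4_bound :: "real \<Rightarrow> real \<Rightarrow> real \<Rightarrow> real \<Rightarrow> real" where
  "C4_bound \<beta> \<gamma> p h =
     (let \<nu> = (1 - h) / 2;
          \<kappa> = p * (1 - h) * (1 - 2 * h) / 2;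
          \<omega> = (1 - h) * ((1 - 2 * h) * (1 - p) / 3 + h / 2)
      in (2 * \<gamma> - h) * \<kappa> - \<beta>^2 * (\<omega> - \<nu>^2) - 2 * \<beta> * \<gamma> * ((1 - h) * \<nu> - 2 * \<omega>) - \<gamma>^2 * \<nu>)"

lemma tendsto_C4_bound:
  "(f \<longlongrightarrow> p) F \<Longrightarrow> (g \<longlongrightarrow> h) F \<Longrightarrow> ((\<lambda>x. C4_bound \<beta> \<gamma> (f x) (g x)) \<longlongrightarrow> C4_bound \<beta> \<gamma> p h) F"
  unfolding C4_bound_def Let_def by (intro tendsto_intros) simp_all

lemma C4_bound_zero:
  "C4_bound \<beta> \<gamma> p 0 = \<gamma> * p + \<beta>^2 * (4 * p - 1) / 12 - \<beta> * \<gamma> * (4 * p - 1) / 3 - \<gamma>^2 / 2"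
  unfolding C4_bound_def Let_def by (simp add: field_simps power2_eq_square)

lemma C4_bound_optimal:
  assumes "0 \<le> p"
  shows "C4_bound (6 * p / (1 + 8 * p)) (3 * p / (1 + 8 * p)) p 0 = 3 * p^2 / (2 * (1 + 8 * p))"
proof -
  define \<gamma> where "\<gamma> = 3 * p / (1 + 8 * p)"
  have "1 + 8 * p > 0" using assms by simp
  then have \<gamma>: "\<gamma> * (1 + 8 * p) = 3 * p" and \<beta>: "6 * p / (1 + 8 * p) = 2 * \<gamma>"
    by (simp_all add: \<gamma>_def)
  have "C4_bound (6 * p / (1 + 8 * p)) \<gamma> p 0 = \<gamma> * p - \<gamma> * (\<gamma> * (1 + 8 * p)) / 6"
    unfolding \<beta> C4_bound_zero by (simp add: power2_eq_square field_simps)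
  also have "\<dots> = \<gamma> * p / 2"
    unfolding \<gamma> by simp
  also have "\<dots> = 3 * p^2 / (2 * (1 + 8 * p))"
    by (simp add: \<gamma>_def power2_eq_square)
  finally show ?thesis unfolding \<gamma>_def .
qed

context finite_tournament
begin

lemma C4_bound_le_pr_C4:
  assumes "V \<noteq> {}"
  defines "h \<equiv> 1 / real (card V)"
  shows "C4_bound \<beta> \<gamma> (pr C3_V C3_E V E) h \<le> pr C4_V C4_E V E * (1 - h) * (1 - 2 * h) * (1 - 3 * h) / 12"
proof -
  define n where "n = real (card V)"
  define p where "p = pr C3_V C3_E V E"
  define q where "q = pr C4_V C4_E V E"
  define C4s where "C4s = real (card {S. S \<subseteq> V \<and> card S = card C4_V \<and> spans_copy C4_V C4_E E S})"
  define S1 where "S1 = (\<Sum>u\<in>V. outdeg V E u)"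
  define S2 where "S2 = (\<Sum>u\<in>V. outdeg V E u ^ 2)"
  have n_pos: "n > 0"
    using assms(1) finite_V by (simp add: n_def card_gt_0_iff)
  have cyc: "cyc_triples V E = p * n * (n - 1) * (n - 2) / 2"
    by (simp add: cyc_triples_eq_pr_C3 p_def n_def)
  have card_C4: "C4s = q * n * (n - 1) * (n - 2) * (n - 3) / 24"
    by (simp add: card_C4_copies_eq_pr C4s_def q_def n_def)
  have S1: "S1 = n * (n - 1) / 2"
    by (simp add: S1_def n_def sum_outdeg)
  have S2: "S2 = n * (n - 1) * ((2 * n - 1) / 2 - p * (n - 2)) / 3"
    using cyc_triples_outdeg unfolding S1_def[symmetric] S2_def[symmetric] n_def[symmetric] cyc S1
    by (simp add: field_simps)
  have "2 * (\<gamma> * n) * cyc_triples V E - \<beta>^2 * (n * S2 - S1^2) - 2 * \<beta> * (\<gamma> * n) * ((n - 1) * S1 - 2 * S2)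
      - (\<gamma> * n)^2 * S1 - cyc_triples V E \<le> 2 * C4s"
    using sum_arc_cyc_completions_sq_ge[of "\<gamma> * n" \<beta>] card_C4_copies_ge
    unfolding S1_def S2_def n_def C4s_def by linarith
  moreover have "2 * (\<gamma> * n) * cyc_triples V E - \<beta>^2 * (n * S2 - S1^2) - 2 * \<beta> * (\<gamma> * n) * ((n - 1) * S1 - 2 * S2)
      - (\<gamma> * n)^2 * S1 - cyc_triples V E = n^4 * C4_bound \<beta> \<gamma> p h"
    using n_pos unfolding cyc S1 S2 C4_bound_def Let_def h_def n_def[symmetric]
    by (simp add: field_simps power2_eq_square power4_eq_xxxx)
  moreover have "2 * C4s = n^4 * (q * (1 - h) * (1 - 2 * h) * (1 - 3 * h) / 12)"
    using n_pos unfolding card_C4 h_def n_def[symmetric]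
    by (simp add: field_simps power4_eq_xxxx)
  ultimately show ?thesis
    using n_pos by (simp add: p_def q_def)
qed

end

lemma C4_bound_le_limit:
  fixes V :: "nat \<Rightarrow> 'a set"
  assumes tour: "\<And>n. tournament (V n) (E n)"
    and size: "filterlim (\<lambda>n. card (V n)) at_top sequentially"
    and lim3: "(\<lambda>n. pr C3_V C3_E (V n) (E n)) \<longlonglongrightarrow> c3"
    and lim4: "(\<lambda>n. pr C4_V C4_E (V n) (E n)) \<longlonglongrightarrow> c4"
  shows "C4_bound \<beta> \<gamma> c3 0 \<le> c4 / 12"
proof -
  define h where "h n = 1 / real (card (V n))" for n
  have "filterlim (\<lambda>n. real (card (V n))) at_top sequentially"
    using filterlim_compose[OF filterlim_real_sequentially size] by (simp add: o_def)
  then have "h \<longlonglongrightarrow> 0"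
    unfolding h_def using tendsto_inverse_0_at_top by (simp flip: inverse_eq_divide)
  have "eventually (\<lambda>n. 1 \<le> card (V n)) sequentially"
    using size by (simp add: filterlim_at_top)
  then have bound: "eventually (\<lambda>n. C4_bound \<beta> \<gamma> (pr C3_V C3_E (V n) (E n)) (h n)
      \<le> pr C4_V C4_E (V n) (E n) * (1 - h n) * (1 - 2 * h n) * (1 - 3 * h n) / 12) sequentially"
  proof eventually_elim
    case (elim n)
    interpret finite_tournament "V n" "E n"
      using tour by (simp add: finite_tournament_def)
    have "V n \<noteq> {}" using elim by auto
    then show ?case unfolding h_def by (rule C4_bound_le_pr_C4)
  qed
  have rhs: "(\<lambda>n. pr C4_V C4_E (V n) (E n) * (1 - h n) * (1 - 2 * h n) * (1 - 3 * h n) / 12)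
      \<longlonglongrightarrow> c4 * (1 - 0) * (1 - 2 * 0) * (1 - 3 * 0) / 12"
    by (intro tendsto_intros lim4 \<open>h \<longlonglongrightarrow> 0\<close>) simp
  show ?thesis
    using tendsto_le[OF sequentially_bot rhs tendsto_C4_bound[OF lim3 \<open>h \<longlonglongrightarrow> 0\<close>] bound] by simp
qed

theorem lemma2p5:
  fixes V :: "nat \<Rightarrow> nat set" and E :: "nat \<Rightarrow> nat \<Rightarrow> nat \<Rightarrow> bool"
    and c3 c4 :: real
  assumes tour: "\<And>n. tournament (V n) (E n)"
    and size: "filterlim (\<lambda>n. card (V n)) at_top sequentially"
    and lim3: "(\<lambda>n. pr C3_V C3_E (V n) (E n)) \<longlonglongrightarrow> c3"
    and lim4: "(\<lambda>n. pr C4_V C4_E (V n) (E n)) \<longlonglongrightarrow> c4"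
  shows "c4 \<ge> 18 * c3 ^ 2 / (1 + 8 * c3)"
proof -
  have "c3 \<ge> 0"
    by (rule LIMSEQ_le_const[OF lim3]) (simp add: pr_def)
  have "3 * c3^2 / (2 * (1 + 8 * c3)) = C4_bound (6 * c3 / (1 + 8 * c3)) (3 * c3 / (1 + 8 * c3)) c3 0"
    using C4_bound_optimal[OF \<open>c3 \<ge> 0\<close>] by simp
  also have "\<dots> \<le> c4 / 12"
    using C4_bound_le_limit[OF tour size lim3 lim4] .
  finally show ?thesis
    using \<open>c3 \<ge> 0\<close> by (simp add: field_simps)
qed

end
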